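(* Let $r_1=\frac5{11}+\frac1{22\pi}$, $r_2=\frac5{11}-\frac1{220\pi}$. Let $f$ be the interval exchange transformation of $I=[-1,1)$ with alphabet $\mathcal{A}=\{A,B,C,D,E,F,G,H\}$, where the intervals $I_A,I_B,\dots,I_H$ appear in $I$ in this order from left to right, the images $f(I_D),f(I_B),f(I_E),f(I_C),f(I_H),f(I_F),f(I_A),f(I_G)$ appear in $I$ in this order from left to right, and the lengths are $$(\lambda_A,\dots,\lambda_H)=\Big(\tfrac1{20\pi},\ \tfrac12,\ \tfrac1{22}-\tfrac{21}{220\pi},\ \tfrac5{11}+\tfrac1{22\pi},\ \tfrac1{20\pi},\ \tfrac12,\ \tfrac1{22}-\tfrac{21}{220\pi},\ \tfrac5{11}+\tfrac1{22\pi}\Big)$$ (equivalently $(r_1-r_2,\ \frac12,\ r_2-2r_1+\frac12,\ r_1,\ r_1-r_2,\ \frac12,\ r_2-2r_1+\frac12,\ r_1)$). Then $f$ satisfies the modified Keane condition: $f^m(p_\alpha)\ne p_\beta$ for all $m\ge1$, all $\alpha\in\mathcal{A}$, and all $\beta\in\mathcal{A}$ with $p_\beta\notin\{-1,0\}$, where $p_\alpha$ denotes the left endpoint of $I_\alpha$.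
   Context: An interval exchange transformation of $I=[-1,1)$: a finite partition of $I$ into intervals $I_\alpha$ closed on the left and open on the right, and a bijection $f:I\to I$ whose restriction to each $I_\alpha$ is a translation; it is determined by the left-to-right order of the $I_\alpha$ in $I$, the left-to-right order of the $f(I_\alpha)$ in $I$, and the lengths $\lambda_\alpha$ of the $I_\alpha$. *)

theory Defs
  imports Complex_Main
begin

text \<open>General interval exchange transformation of I = [-1,1), given by the
left-to-right order of the intervals I_a in I (list top), the left-to-right order of
the images f(I_a) in I (list bot), and the lengths lam.\<close>

definition iet_left :: "'a list \<Rightarrow> ('a \<Rightarrow> real) \<Rightarrow> 'a \<Rightarrow> real" where
  "iet_left ord lam a = -1 + sum_list (map lam (takeWhile (\<lambda>b. b \<noteq> a) ord))"

definition iet_interval :: "'a list \<Rightarrow> ('a \<Rightarrow> real) \<Rightarrow> 'a \<Rightarrow> real set" where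
  "iet_interval tp lam a = {iet_left tp lam a ..< iet_left tp lam a + lam a}"

definition iet_map :: "'a list \<Rightarrow> 'a list \<Rightarrow> ('a \<Rightarrow> real) \<Rightarrow> real \<Rightarrow> real" where
  "iet_map tp bt lam x =
     (if \<exists>a\<in>set tp. x \<in> iet_interval tp lam a
      then (let a = (SOME a. a \<in> set tp \<and> x \<in> iet_interval tp lam a)
            in x - iet_left tp lam a + iet_left bt lam a)
      else x)"

datatype letter = A | B | C | D | E | F | G | H

definition r1 :: real where "r1 = 5/11 + 1/(22*pi)"
definition r2 :: real where "r2 = 5/11 - 1/(220*pi)"

definition top8 :: "letter list" where "top8 = [A, B, C, D, E, F, G, H]"
definition bot8 :: "letter list" where "bot8 = [D, B, E, C, H, F, A, G]"

fun lam8 :: "letter \<Rightarrow> real" where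
  "lam8 A = 1/(20*pi)"
| "lam8 B = 1/2"
| "lam8 C = 1/22 - 21/(220*pi)"
| "lam8 D = 5/11 + 1/(22*pi)"
| "lam8 E = 1/(20*pi)"
| "lam8 F = 1/2"
| "lam8 G = 1/22 - 21/(220*pi)"
| "lam8 H = 5/11 + 1/(22*pi)"

definition f8 :: "real \<Rightarrow> real" where "f8 = iet_map top8 bot8 lam8"

definition p8 :: "letter \<Rightarrow> real" where "p8 = iet_left top8 lam8"

end

theory Submission
  imports Defs "HOL-Computational_Algebra.Polynomial"
begin

text \<open>All points on the orbits in question lie in \<open>\<rat> + \<rat>/\<pi>\<close>, and by the irrationality
of \<open>\<pi>\<close> (Niven's argument) their two rational coordinates are unique. Every translation of
\<open>f8\<close> has nonnegative weight under the \<open>\<rat>\<close>-linear functional \<open>a + b/\<pi> \<mapsto> 2a + 200b\<close>,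
whereas the left endpoints \<open>p\<^sub>\<beta> \<notin> {-1, 0}\<close> have weight at most 11. Hence an orbit that
reaches weight above 11 never meets such an endpoint again, and each orbit starting at a
left endpoint gets there within three steps without meeting one on the way.\<close>

lemma coeff_mult_Ints:
  fixes p q :: "'a::comm_ring_1 poly"
  assumes "\<And>i. coeff p i \<in> \<int>" "\<And>i. coeff q i \<in> \<int>"
  shows "coeff (p * q) i \<in> \<int>"
  using assms by (auto simp: coeff_mult intro: Ints_mult)

lemma coeff_power_Ints:
  fixes p :: "'a::comm_ring_1 poly"
  assumes "\<And>i. coeff p i \<in> \<int>"
  shows "coeff (p ^ k) i \<in> \<int>"
proof (induction k arbitrary: i)
  case 0
  then show ?case by simp
next
  case (Suc k)
  then show ?case by (simp add: coeff_mult_Ints assms)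
qed

lemma poly_higher_pderiv_0_Ints:
  fixes g :: "real poly"
  assumes "\<And>i. coeff g i \<in> \<int>" and "\<And>i. i < n \<Longrightarrow> coeff g i = 0"
  shows "poly ((pderiv ^^ j) (smult (1 / fact n) g)) 0 \<in> \<int>"
proof (cases "j < n")
  case True
  then show ?thesis by (simp add: poly_0_coeff_0 coeff_higher_pderiv assms(2))
next
  case False
  then obtain k :: nat where "fact j = fact n * k"
    using fact_dvd[of n j] by (auto simp: dvd_def)
  then have "(fact j :: real) = fact n * of_nat k"
    by (metis of_nat_fact of_nat_mult)
  then have "poly ((pderiv ^^ j) (smult (1 / fact n) g)) 0 = of_nat k * coeff g j"
    by (simp add: poly_0_coeff_0 coeff_higher_pderiv pochhammer_fact[symmetric])
  then show ?thesis using assms(1) by simp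
qed

lemma poly_higher_pderiv_reflect:
  fixes p :: "'a::idom poly"
  assumes "pcompose p [:c, -1:] = p"
  shows "poly ((pderiv ^^ j) p) c = (-1) ^ j * poly ((pderiv ^^ j) p) 0"
proof -
  have "(pderiv ^^ j) p = smult ((-1) ^ j) (pcompose ((pderiv ^^ j) p) [:c, -1:])"
  proof (induction j)
    case 0
    then show ?case using assms by simp
  next
    case (Suc j)
    have "(pderiv ^^ Suc j) p = pderiv (smult ((-1) ^ j) (pcompose ((pderiv ^^ j) p) [:c, -1:]))"
      using Suc by (metis funpow.simps(2) o_apply)
    then show ?case
      by (simp add: pderiv_smult pderiv_pcompose pderiv_pCons)
  qed
  from arg_cong[where f = "\<lambda>q. poly q 0", OF this]
  have "poly ((pderiv ^^ j) p) 0 = (-1) ^ j * poly ((pderiv ^^ j) p) c"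
    by (simp add: poly_pcompose)
  then show ?thesis by (simp add: power_mult_distrib[symmetric])
qed

definition alt_even_pderivs :: "real poly \<Rightarrow> real poly" where
  "alt_even_pderivs p = (\<Sum>k\<le>degree p. smult ((-1) ^ k) ((pderiv ^^ (2 * k)) p))"

lemma pderiv_pderiv_alt_even_pderivs:
  "pderiv (pderiv (alt_even_pderivs p)) + alt_even_pderivs p = p"
proof -
  define n where "n = degree p"
  define D where "D j = (pderiv ^^ j) p" for j
  have D_vanish: "D (2 * n + 2) = 0"
    using degree_higher_pderiv[of "2 * n + 1" p]
    by (simp add: D_def n_def pderiv_eq_0_iff)
  have "pderiv (pderiv (alt_even_pderivs p)) = (pderiv ^^ 2) (alt_even_pderivs p)"
    by (simp add: numeral_2_eq_2)
  also have "\<dots> = (\<Sum>k\<le>n. smult ((-1) ^ k) ((pderiv ^^ 2) (D (2 * k))))"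
    by (simp add: alt_even_pderivs_def n_def D_def higher_pderiv_sum higher_pderiv_smult)
  also have "\<dots> = (\<Sum>k\<le>n. smult ((-1) ^ k) (D (2 * k + 2)))"
    unfolding D_def by (metis (no_types) add.commute comp_apply funpow_add)
  also have "\<dots> = (\<Sum>k<n. smult ((-1) ^ k) (D (2 * k + 2)))"
    using D_vanish by (simp add: lessThan_Suc_atMost[symmetric])
  finally have "pderiv (pderiv (alt_even_pderivs p)) = (\<Sum>k<n. smult ((-1) ^ k) (D (2 * k + 2)))" .
  moreover have "alt_even_pderivs p = p - (\<Sum>k<n. smult ((-1) ^ k) (D (2 * k + 2)))"
    unfolding alt_even_pderivs_def n_def[symmetric]
    by (subst sum.atMost_shift) (simp add: D_def sum_negf)
  ultimately show ?thesis by simp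
qed

lemma alt_even_pderivs_sin_cos_has_derivative:
  "((\<lambda>x. poly (pderiv (alt_even_pderivs p)) x * sin x - poly (alt_even_pderivs p) x * cos x)
     has_real_derivative poly p x * sin x) (at x)"
proof -
  let ?F = "alt_even_pderivs p"
  have "((\<lambda>x. poly (pderiv ?F) x * sin x - poly ?F x * cos x) has_real_derivative
          poly (pderiv (pderiv ?F) + ?F) x * sin x) (at x)"
    by (rule derivative_eq_intros refl | simp add: algebra_simps)+
  then show ?thesis by (simp add: pderiv_pderiv_alt_even_pderivs)
qed

lemma alt_even_pderivs_mean_value:
  obtains z where "0 < z" "z < pi"
    "poly (alt_even_pderivs p) pi + poly (alt_even_pderivs p) 0 = pi * (poly p z * sin z)"
proof -
  let ?F = "alt_even_pderivs p"
  obtain z where "0 < z" "z < pi" and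
    "(poly (pderiv ?F) pi * sin pi - poly ?F pi * cos pi)
       - (poly (pderiv ?F) 0 * sin 0 - poly ?F 0 * cos 0) = (pi - 0) * (poly p z * sin z)"
    using MVT2[OF pi_gt_zero alt_even_pderivs_sin_cos_has_derivative] by blast
  then show thesis by (intro that) simp_all
qed

definition niven_poly :: "nat \<Rightarrow> real \<Rightarrow> real \<Rightarrow> real poly" where
  "niven_poly n a b = smult (1 / fact n) (monom 1 n * [:a, - b:] ^ n)"

lemma poly_niven_poly: "poly (niven_poly n a b) x = x ^ n * (a - b * x) ^ n / fact n"
  by (simp add: niven_poly_def poly_monom mult.commute)

lemma niven_poly_reflect:
  assumes "b * c = a"
  shows "pcompose (niven_poly n a b) [:c, -1:] = niven_poly n a b"
proof (rule poly_eq_poly_eq_iff[THEN iffD1], rule ext)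
  fix x
  have "a - b * (c - x) = b * x"
    using assms by (simp add: algebra_simps)
  then have "poly (pcompose (niven_poly n a b) [:c, -1:]) x = (c - x) ^ n * (b * x) ^ n / fact n"
    by (simp add: poly_pcompose poly_niven_poly)
  also have "\<dots> = ((c - x) * b) ^ n * x ^ n / fact n"
    by (simp add: power_mult_distrib)
  also have "(c - x) * b = a - b * x"
    using assms by (simp add: algebra_simps)
  finally show "poly (pcompose (niven_poly n a b) [:c, -1:]) x = poly (niven_poly n a b) x"
    by (simp add: poly_niven_poly)
qed

lemma niven_poly_higher_pderiv_Ints:
  assumes "a \<in> \<int>" "b \<in> \<int>" "b * c = a"
  shows "poly ((pderiv ^^ j) (niven_poly n a b)) 0 \<in> \<int>"
    and "poly ((pderiv ^^ j) (niven_poly n a b)) c \<in> \<int>"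
proof -
  have "coeff [:a, - b:] i \<in> \<int>" for i
    using assms by (auto simp: coeff_pCons split: nat.splits)
  then have "coeff (monom 1 n * [:a, - b:] ^ n) i \<in> \<int>" for i
    by (simp add: coeff_monom_mult coeff_power_Ints)
  then show at_0: "poly ((pderiv ^^ j) (niven_poly n a b)) 0 \<in> \<int>"
    unfolding niven_poly_def by (rule poly_higher_pderiv_0_Ints) (simp add: coeff_monom_mult)
  then show "poly ((pderiv ^^ j) (niven_poly n a b)) c \<in> \<int>"
    by (simp add: poly_higher_pderiv_reflect[OF niven_poly_reflect[OF assms(3)]])
qed

lemma niven_poly_bounds:
  assumes "0 < z" "0 < b" "b * z < a"
  shows "0 < poly (niven_poly n a b) z" and "poly (niven_poly n a b) z \<le> (z * a) ^ n / fact n"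
proof -
  have pos: "0 < a - b * z" and le: "a - b * z \<le> a"
    using assms by simp_all
  then show "0 < poly (niven_poly n a b) z"
    using assms(1) by (simp add: poly_niven_poly)
  show "poly (niven_poly n a b) z \<le> (z * a) ^ n / fact n"
    using assms(1) pos le unfolding poly_niven_poly power_mult_distrib
    by (intro divide_right_mono mult_left_mono power_mono) auto
qed

lemma pi_irrational: "pi \<notin> \<rat>"
proof
  assume "pi \<in> \<rat>"
  then obtain a b :: int where b: "b > 0" and "pi = of_int a / of_int b"
    by (auto elim: Rats_cases')
  then have b_pi: "of_int b * pi = of_int a"
    by (simp add: field_simps)
  have "(\<lambda>n. (pi * a) ^ n / fact n) \<longlonglongrightarrow> 0"
    using summable_LIMSEQ_zero[OF summable_exp[of "pi * a"]] by (simp add: divide_inverse mult.commute)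
  then have "\<forall>\<^sub>F n in sequentially. (pi * a) ^ n / fact n < 1 / pi"
    by (rule order_tendstoD) simp
  then obtain n where n: "(pi * a) ^ n / fact n < 1 / pi"
    by (meson eventually_sequentially order_refl)
  define p where "p = niven_poly n (of_int a) (of_int b)"
  obtain z where z: "0 < z" "z < pi"
    and mvt: "poly (alt_even_pderivs p) pi + poly (alt_even_pderivs p) 0 = pi * (poly p z * sin z)"
    by (rule alt_even_pderivs_mean_value)
  have "poly (alt_even_pderivs p) pi + poly (alt_even_pderivs p) 0 \<in> \<int>"
    using niven_poly_higher_pderiv_Ints[OF _ _ b_pi] unfolding p_def
    by (auto simp: alt_even_pderivs_def poly_sum intro!: Ints_add Ints_mult)
  moreover have "0 < pi * (poly p z * sin z)" and "pi * (poly p z * sin z) < 1"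
  proof -
    have bz: "of_int b * z < of_int a"
      using z(2) b by (simp add: b_pi[symmetric])
    moreover have "0 < of_int b * z"
      using z(1) b by simp
    ultimately have a_pos: "0 < (of_int a :: real)"
      by linarith
    from bz have p_pos: "0 < poly p z"
      using niven_poly_bounds(1)[OF z(1)] b unfolding p_def by simp
    from bz have "poly p z \<le> (z * a) ^ n / fact n"
      using niven_poly_bounds(2)[OF z(1)] b unfolding p_def by simp
    also have "\<dots> \<le> (pi * a) ^ n / fact n"
      using z a_pos by (intro divide_right_mono power_mono mult_right_mono) auto
    also note n
    finally have "pi * poly p z < 1"
      using pi_gt_zero by (simp add: less_divide_eq mult.commute)
    moreover have "pi * (poly p z * sin z) \<le> pi * poly p z"
      using sin_le_one[of z] p_pos pi_gt_zero by (intro mult_left_mono) (simp_all add: mult_left_le)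
    ultimately show "pi * (poly p z * sin z) < 1"
      by linarith
    show "0 < pi * (poly p z * sin z)"
      using p_pos z sin_gt_zero[of z] by simp
  qed
  ultimately show False
    using mvt by (auto elim!: Ints_cases)
qed

definition inv_pi :: real where "inv_pi = 1 / pi"

lemma inv_pi_bounds: "1/4 < inv_pi" "inv_pi \<le> 1/3"
proof -
  have "sin (pi / 6) \<le> pi / 6"
    by (rule sin_x_le_x) simp
  then have "3 \<le> pi"
    by (simp add: sin_30)
  then show "1/4 < inv_pi" "inv_pi \<le> 1/3"
    using pi_less_4 by (simp_all add: inv_pi_def field_simps)
qed

lemma rat_add_mult_inv_pi_eq_iff:
  assumes "a \<in> \<rat>" "b \<in> \<rat>" "a' \<in> \<rat>" "b' \<in> \<rat>"
  shows "a + b * inv_pi = a' + b' * inv_pi \<longleftrightarrow> a = a' \<and> b = b'"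
proof
  assume eq: "a + b * inv_pi = a' + b' * inv_pi"
  show "a = a' \<and> b = b'"
  proof (cases "b = b'")
    case True
    then show ?thesis using eq by simp
  next
    case False
    have pi_eq: "pi * (a' - a) = b - b'"
      using eq by (simp add: inv_pi_def field_simps)
    with False have "a' - a \<noteq> 0"
      by auto
    with pi_eq have "pi = (b - b') / (a' - a)"
      by (simp add: eq_divide_eq)
    also have "\<dots> \<in> \<rat>"
      using assms by simp
    finally show ?thesis
      using pi_irrational by blast
  qed
qed simp

text \<open>Coordinates in the basis \<open>(1, 1/\<pi>)\<close> of the left endpoints, lengths and translations
of the intervals \<open>I\<^sub>\<alpha>\<close> of \<open>f8\<close>.\<close>

fun left0 :: "letter \<Rightarrow> real" where
  "left0 A = -1" | "left0 B = -1" | "left0 C = -1/2" | "left0 D = -5/11"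
| "left0 E = 0" | "left0 F = 0" | "left0 G = 1/2" | "left0 H = 6/11"

fun left1 :: "letter \<Rightarrow> real" where
  "left1 A = 0" | "left1 B = 1/20" | "left1 C = 1/20" | "left1 D = -1/22"
| "left1 E = 0" | "left1 F = 1/20" | "left1 G = 1/20" | "left1 H = -1/22"

fun len0 :: "letter \<Rightarrow> real" where
  "len0 A = 0" | "len0 B = 1/2" | "len0 C = 1/22" | "len0 D = 5/11"
| "len0 E = 0" | "len0 F = 1/2" | "len0 G = 1/22" | "len0 H = 5/11"

fun len1 :: "letter \<Rightarrow> real" where
  "len1 A = 1/20" | "len1 B = 0" | "len1 C = -21/220" | "len1 D = 1/22"
| "len1 E = 1/20" | "len1 F = 0" | "len1 G = -21/220" | "len1 H = 1/22"

fun shift0 :: "letter \<Rightarrow> real" where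
  "shift0 A = 43/22" | "shift0 B = 5/11" | "shift0 C = 5/11" | "shift0 D = -6/11"
| "shift0 E = -1/22" | "shift0 F = 5/11" | "shift0 G = 5/11" | "shift0 H = -6/11"

fun shift1 :: "letter \<Rightarrow> real" where
  "shift1 A = 1/22" | "shift1 B = -1/220" | "shift1 C = 1/22" | "shift1 D = 1/22"
| "shift1 E = 1/22" | "shift1 F = -1/220" | "shift1 G = 1/22" | "shift1 H = 1/22"

lemma p8_coords: "p8 c = left0 c + left1 c * inv_pi"
  by (cases c) (simp_all add: p8_def iet_left_def top8_def inv_pi_def field_simps)

lemma rat_eq_p8_iff:
  "a \<in> \<rat> \<Longrightarrow> b \<in> \<rat> \<Longrightarrow> a + b * inv_pi = p8 c \<longleftrightarrow> a = left0 c \<and> b = left1 c"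
  unfolding p8_coords by (rule rat_add_mult_inv_pi_eq_iff) (cases c; simp)+

lemma iet_left_bot8_coords: "iet_left bot8 lam8 c = p8 c + shift0 c + shift1 c * inv_pi"
  by (cases c) (simp_all add: p8_coords iet_left_def bot8_def inv_pi_def field_simps)

lemma iet_interval_top8:
  "iet_interval top8 lam8 c =
     {left0 c + left1 c * inv_pi ..< left0 c + len0 c + (left1 c + len1 c) * inv_pi}"
proof -
  have "lam8 c = len0 c + len1 c * inv_pi"
    by (cases c) (simp_all add: inv_pi_def field_simps)
  then show ?thesis
    by (simp add: iet_interval_def p8_def[symmetric] p8_coords algebra_simps)
qed

lemma iet_interval_top8_unique:
  "x \<in> iet_interval top8 lam8 a \<Longrightarrow> x \<in> iet_interval top8 lam8 c \<Longrightarrow> a = c"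
  using inv_pi_bounds by (cases a; cases c) (auto simp: iet_interval_top8)

lemma iet_interval_top8_cover:
  assumes "-1 \<le> x" "x < 1"
  obtains c where "x \<in> iet_interval top8 lam8 c"
proof -
  have "\<exists>c\<in>{A,B,C,D,E,F,G,H}. x \<in> iet_interval top8 lam8 c"
    using assms inv_pi_bounds by (simp add: iet_interval_top8) linarith
  then show thesis using that by blast
qed

lemma f8_eq_translate:
  assumes "x \<in> iet_interval top8 lam8 c"
  shows "f8 x = x + shift0 c + shift1 c * inv_pi"
proof -
  have c: "c \<in> set top8"
    by (cases c) (simp_all add: top8_def)
  have "(SOME a. a \<in> set top8 \<and> x \<in> iet_interval top8 lam8 a) = c"
    using assms c iet_interval_top8_unique by (intro some_equality) auto
  then show ?thesis
    using assms c by (auto simp: f8_def iet_map_def p8_def[symmetric] iet_left_bot8_coords)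
qed

lemma f8_coords:
  assumes "left0 c + left1 c * inv_pi \<le> a + b * inv_pi"
    and "a + b * inv_pi < left0 c + len0 c + (left1 c + len1 c) * inv_pi"
  shows "f8 (a + b * inv_pi) = (a + shift0 c) + (b + shift1 c) * inv_pi"
  using assms by (subst f8_eq_translate[of _ c]) (simp_all add: iet_interval_top8 algebra_simps)

lemma f8_step:
  assumes "-1 \<le> x" "x < 1"
  obtains c where "f8 x = x + shift0 c + shift1 c * inv_pi" "-1 \<le> f8 x" "f8 x < 1"
proof -
  obtain c where c: "x \<in> iet_interval top8 lam8 c"
    using iet_interval_top8_cover[OF assms] .
  have "-1 \<le> x + shift0 c + shift1 c * inv_pi" "x + shift0 c + shift1 c * inv_pi < 1"
    using c inv_pi_bounds by (cases c; simp add: iet_interval_top8)+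
  then show thesis
    using that f8_eq_translate[OF c] by simp
qed

definition heavy :: "real set" where
  "heavy = {a + b * inv_pi | a b. a \<in> \<rat> \<and> b \<in> \<rat> \<and> 11 < 2 * a + 200 * b \<and>
                                -1 \<le> a + b * inv_pi \<and> a + b * inv_pi < 1}"

lemma f8_heavy: "x \<in> heavy \<Longrightarrow> f8 x \<in> heavy"
proof -
  assume "x \<in> heavy"
  then obtain a b where ab: "x = a + b * inv_pi" "a \<in> \<rat>" "b \<in> \<rat>" "11 < 2 * a + 200 * b"
    and range: "-1 \<le> x" "x < 1"
    by (auto simp: heavy_def)
  obtain c where c: "f8 x = x + shift0 c + shift1 c * inv_pi" "-1 \<le> f8 x" "f8 x < 1"
    using f8_step[OF range] .
  have "shift0 c \<in> \<rat>" "shift1 c \<in> \<rat>" "0 \<le> 2 * shift0 c + 200 * shift1 c"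
    by (cases c; simp)+
  with ab c show "f8 x \<in> heavy"
    unfolding heavy_def
    by (intro CollectI exI[of _ "a + shift0 c"] exI[of _ "b + shift1 c"]) (auto simp: algebra_simps)
qed

lemma funpow_f8_heavy: "x \<in> heavy \<Longrightarrow> (f8 ^^ m) x \<in> heavy"
  by (induction m) (simp_all add: f8_heavy)

abbreviation target_letters :: "letter set" where
  "target_letters \<equiv> {B, C, D, F, G, H}"

lemma p8_not_heavy:
  assumes "\<beta> \<in> target_letters"
  shows "p8 \<beta> \<notin> heavy"
proof
  assume "p8 \<beta> \<in> heavy"
  then obtain a b where "a \<in> \<rat>" "b \<in> \<rat>" "a + b * inv_pi = p8 \<beta>" "11 < 2 * a + 200 * b"
    by (auto simp: heavy_def)
  then have "11 < 2 * left0 \<beta> + 200 * left1 \<beta>"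
    by (simp add: rat_eq_p8_iff)
  with assms show False
    by auto
qed

definition avoids_targets :: "real \<Rightarrow> bool" where
  "avoids_targets x \<longleftrightarrow> (\<forall>m \<ge> 1. \<forall>\<beta> \<in> target_letters. (f8 ^^ m) x \<noteq> p8 \<beta>)"

lemma heavy_avoids_targets:
  assumes "a \<in> \<rat>" "b \<in> \<rat>" "11 < 2 * a + 200 * b" "-1 \<le> a + b * inv_pi" "a + b * inv_pi < 1"
  shows "avoids_targets (a + b * inv_pi)"
proof -
  have "a + b * inv_pi \<in> heavy"
    using assms by (auto simp: heavy_def)
  then show ?thesis
    using funpow_f8_heavy p8_not_heavy unfolding avoids_targets_def by metis
qed

lemma avoids_targets_backward:
  assumes rat: "a \<in> \<rat>" "b \<in> \<rat>"
    and interval: "left0 c + left1 c * inv_pi \<le> a + b * inv_pi"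
      "a + b * inv_pi < left0 c + len0 c + (left1 c + len1 c) * inv_pi"
    and image_not_target:
      "\<forall>\<beta> \<in> target_letters. a + shift0 c \<noteq> left0 \<beta> \<or> b + shift1 c \<noteq> left1 \<beta>"
    and image_avoids: "avoids_targets ((a + shift0 c) + (b + shift1 c) * inv_pi)"
  shows "avoids_targets (a + b * inv_pi)"
  unfolding avoids_targets_def
proof (intro allI impI ballI)
  fix m :: nat and \<beta> assume m: "1 \<le> m" and \<beta>: "\<beta> \<in> target_letters"
  let ?y = "(a + shift0 c) + (b + shift1 c) * inv_pi"
  have y: "f8 (a + b * inv_pi) = ?y"
    using f8_coords[OF interval] .
  have "shift0 c \<in> \<rat>" "shift1 c \<in> \<rat>"
    by (cases c; simp)+
  with rat have "?y = p8 \<beta> \<longleftrightarrow> a + shift0 c = left0 \<beta> \<and> b + shift1 c = left1 \<beta>"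
    by (intro rat_eq_p8_iff) simp_all
  with image_not_target \<beta> have "?y \<noteq> p8 \<beta>"
    by blast
  moreover have "(f8 ^^ k) ?y \<noteq> p8 \<beta>" if "1 \<le> k" for k
    using image_avoids that \<beta> unfolding avoids_targets_def by blast
  moreover obtain k where k: "m = Suc k"
    using m by (cases m) auto
  then have "(f8 ^^ m) (a + b * inv_pi) = (f8 ^^ k) ?y"
    by (simp add: funpow_Suc_right y del: funpow.simps)
  ultimately show "(f8 ^^ m) (a + b * inv_pi) \<noteq> p8 \<beta>"
    by (cases "k = 0") auto
qed

lemma avoids_targets_p8_A: "avoids_targets (p8 A)"
proof -
  have "avoids_targets (9/22 + 1/11 * inv_pi)"
    using inv_pi_bounds by (intro heavy_avoids_targets) simp_all
  then have "avoids_targets (21/22 + 1/22 * inv_pi)"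
    using avoids_targets_backward[of "21/22" "1/22" H] inv_pi_bounds by simp
  then show ?thesis
    using avoids_targets_backward[of "-1" 0 A] inv_pi_bounds by (simp add: p8_coords)
qed

lemma avoids_targets_p8_E: "avoids_targets (p8 E)"
proof -
  have "avoids_targets (-13/22 + 1/11 * inv_pi)"
    using inv_pi_bounds by (intro heavy_avoids_targets) simp_all
  then have "avoids_targets (-1/22 + 1/22 * inv_pi)"
    using avoids_targets_backward[of "-1/22" "1/22" D] inv_pi_bounds by simp
  then show ?thesis
    using avoids_targets_backward[of 0 0 E] inv_pi_bounds by (simp add: p8_coords)
qed

lemma avoids_targets_p8: "avoids_targets (p8 \<alpha>)"
proof (cases \<alpha>)
  case B
  have "avoids_targets (-7/11 + 19/220 * inv_pi)"
    using inv_pi_bounds by (intro heavy_avoids_targets) simp_all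
  then have "avoids_targets (-1/11 + 9/220 * inv_pi)"
    using avoids_targets_backward[of "-1/11" "9/220" D] inv_pi_bounds by simp
  then have "avoids_targets (-6/11 + 1/22 * inv_pi)"
    using avoids_targets_backward[of "-6/11" "1/22" B] inv_pi_bounds by simp
  then show ?thesis
    using B avoids_targets_backward[of "-1" "1/20" B] inv_pi_bounds by (simp add: p8_coords)
next
  case C
  have "avoids_targets (-1/22 + 21/220 * inv_pi)"
    using inv_pi_bounds by (intro heavy_avoids_targets) simp_all
  then show ?thesis
    using C avoids_targets_backward[of "-1/2" "1/20" C] inv_pi_bounds by (simp add: p8_coords)
next
  case D
  show ?thesis
    using avoids_targets_p8_A D avoids_targets_backward[of "-5/11" "-1/22" D] inv_pi_bounds
    by (simp add: p8_coords)
next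
  case F
  have "avoids_targets (4/11 + 19/220 * inv_pi)"
    using inv_pi_bounds by (intro heavy_avoids_targets) simp_all
  then have "avoids_targets (10/11 + 9/220 * inv_pi)"
    using avoids_targets_backward[of "10/11" "9/220" H] inv_pi_bounds by simp
  then have "avoids_targets (5/11 + 1/22 * inv_pi)"
    using avoids_targets_backward[of "5/11" "1/22" F] inv_pi_bounds by simp
  then show ?thesis
    using F avoids_targets_backward[of 0 "1/20" F] inv_pi_bounds by (simp add: p8_coords)
next
  case G
  have "avoids_targets (21/22 + 21/220 * inv_pi)"
    using inv_pi_bounds by (intro heavy_avoids_targets) simp_all
  then show ?thesis
    using G avoids_targets_backward[of "1/2" "1/20" G] inv_pi_bounds by (simp add: p8_coords)
next
  case H
  show ?thesis
    using avoids_targets_p8_E H avoids_targets_backward[of "6/11" "-1/22" H] inv_pi_bounds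
    by (simp add: p8_coords)
qed (simp_all add: avoids_targets_p8_A avoids_targets_p8_E)

theorem proposition8p5:
  shows "\<forall>m::nat. m \<ge> 1 \<longrightarrow> (\<forall>\<alpha> \<beta>. p8 \<beta> \<notin> {-1, 0} \<longrightarrow> (f8 ^^ m) (p8 \<alpha>) \<noteq> p8 \<beta>)"
proof (intro allI impI)
  fix m :: nat and \<alpha> \<beta>
  assume "1 \<le> m" and "p8 \<beta> \<notin> {-1, 0}"
  moreover have "\<beta> \<in> target_letters" if "p8 \<beta> \<notin> {-1, 0}"
    using that by (cases \<beta>) (simp_all add: p8_coords)
  ultimately show "(f8 ^^ m) (p8 \<alpha>) \<noteq> p8 \<beta>"
    using avoids_targets_p8[of \<alpha>] unfolding avoids_targets_def by blast
qed

end
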